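(* Let $\mathcal{R}$ be the right angled Artin group with generators $G,Q,P,F$ and relations $GQ=QG$, $QP=PQ$, $PF=FP$ (the path graph $G - Q - P - F$). Let $\mathbb{F}$ be either $\mathbb{C}$ with prime subfield $\mathbb{P}=\mathbb{Q}$, or an algebraically closed field of characteristic $p>0$ of infinite transcendence degree over $\mathbb{F}_p$, with prime subfield $\mathbb{P}=\mathbb{F}_p$. Let $a,b,c,d,\alpha,\beta,\gamma,\delta,\lambda\in\mathbb{F}$ with $ad-bc\ne0$, $\alpha\delta-\beta\gamma\neq0$, $\lambda\ne0$, and set $$G_0=\begin{pmatrix}a&b&0\\c&d&0\\0&0&1\end{pmatrix},\ Q_0=\begin{pmatrix}\lambda&0&0\\0&\lambda&0\\0&0&\lambda^{-1}\end{pmatrix},\ P_0=\begin{pmatrix}\lambda&0&0\\0&\lambda^{-1}&0\\0&0&\lambda\end{pmatrix},\ F_0=\begin{pmatrix}\alpha&0&\beta\\0&1&0\\\gamma&0&\delta\end{pmatrix}.$$ Suppose that: (1) no non-trivial power of the matrix $\begin{pmatrix}\alpha&\beta\\\gamma&\delta\end{pmatrix}$ has an off-diagonal entry equal to zero; and (2) the matrices $\begin{pmatrix}a&b\\c&d\end{pmatrix}$ and $\begin{pmatrix}\lambda&0\\0&\lambda^{-1}\end{pmatrix}$ in $GL(2,\mathbb{F})$ generate a non-abelian free group in which every matrix with top left entry equal to $1$ is the identity $I_2$. Let $\phi\in\mathbb{F}$ be transcendental over $\mathbb{P}(a,b,c,d,\alpha,\beta,\gamma,\delta,\lambda)$ and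 $D=\mathrm{diag}(\phi,\phi^2,\phi^3)$. Then the assignment $$G\mapsto F_0G_0F_0^{-1},\quad Q\mapsto F_0Q_0F_0^{-1},\quad P\mapsto P_0,\quad F\mapsto DF_0D^{-1}$$ extends to a faithful representation $\mathcal{R}\to GL(3,\mathbb{F})$. *)

theory Defs
  imports "HOL-Analysis.Analysis" "HOL-Computational_Algebra.Polynomial"
begin

text \<open>A word over a generator type: a list of letters (g, True) = g and (g, False) = g^-1.\<close>
type_synonym 'g word = "('g \<times> bool) list"

text \<open>The congruence on words defining the group with generators 'g and defining
relations g h = h g whenever E g h (a right angled Artin group; for E = False this is
the free group on 'g).\<close>
inductive word_equiv :: "('g \<Rightarrow> 'g \<Rightarrow> bool) \<Rightarrow> 'g word \<Rightarrow> 'g word \<Rightarrow> bool"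
  for E :: "'g \<Rightarrow> 'g \<Rightarrow> bool" where
  refl: "word_equiv E w w"
| sym: "word_equiv E u w \<Longrightarrow> word_equiv E w u"
| trans: "word_equiv E u v \<Longrightarrow> word_equiv E v w \<Longrightarrow> word_equiv E u w"
| cancel: "word_equiv E (u @ [(g, s), (g, \<not> s)] @ v) (u @ v)"
| comm: "E g h \<Longrightarrow> word_equiv E (u @ [(g, s), (h, t)] @ v) (u @ [(h, t), (g, s)] @ v)"

definition word_eval :: "('g \<Rightarrow> 'a::field ^'n^'n) \<Rightarrow> 'g word \<Rightarrow> 'a^'n^'n" where
  "word_eval \<rho> w = foldr (\<lambda>(g, s) M. (if s then \<rho> g else matrix_inv (\<rho> g)) ** M) w (mat 1)"

definition free_on :: "('g \<Rightarrow> 'a::field ^'n^'n) \<Rightarrow> bool" where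
  "free_on \<rho> \<longleftrightarrow> (\<forall>g. invertible (\<rho> g)) \<and>
     (\<forall>w. word_eval \<rho> w = mat 1 \<longrightarrow> word_equiv (\<lambda>_ _. False) w [])"

datatype gen = Gg | Qg | Pg | Fg

definition path_edge :: "gen \<Rightarrow> gen \<Rightarrow> bool" where
  "path_edge x y \<longleftrightarrow> {x, y} = {Gg, Qg} \<or> {x, y} = {Qg, Pg} \<or> {x, y} = {Pg, Fg}"

definition faithful_raag_rep :: "('g \<Rightarrow> 'g \<Rightarrow> bool) \<Rightarrow> ('g \<Rightarrow> 'a::field ^'n^'n) \<Rightarrow> bool" where
  "faithful_raag_rep E \<rho> \<longleftrightarrow>
     (\<forall>g. invertible (\<rho> g)) \<and>
     (\<forall>g h. E g h \<longrightarrow> \<rho> g ** \<rho> h = \<rho> h ** \<rho> g) \<and>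
     (\<forall>w. word_eval \<rho> w = mat 1 \<longrightarrow> word_equiv E w [])"

text \<open>The subfield generated by S (contains the prime subfield).\<close>
inductive_set subfield_gen :: "'a::field set \<Rightarrow> 'a set" for S :: "'a set" where
  base: "x \<in> S \<Longrightarrow> x \<in> subfield_gen S"
| zero: "0 \<in> subfield_gen S"
| one: "1 \<in> subfield_gen S"
| add: "x \<in> subfield_gen S \<Longrightarrow> y \<in> subfield_gen S \<Longrightarrow> x + y \<in> subfield_gen S"
| uminus: "x \<in> subfield_gen S \<Longrightarrow> - x \<in> subfield_gen S"
| mult: "x \<in> subfield_gen S \<Longrightarrow> y \<in> subfield_gen S \<Longrightarrow> x * y \<in> subfield_gen S"
| inv: "x \<in> subfield_gen S \<Longrightarrow> inverse x \<in> subfield_gen S"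

definition transcendental_over :: "'a::field set \<Rightarrow> 'a \<Rightarrow> bool" where
  "transcendental_over S x \<longleftrightarrow>
     (\<forall>p :: 'a poly. p \<noteq> 0 \<longrightarrow> (\<forall>i. coeff p i \<in> subfield_gen S) \<longrightarrow> poly p x \<noteq> 0)"

definition alg_indep :: "'a::field set \<Rightarrow> bool" where
  "alg_indep T \<longleftrightarrow> (\<forall>t\<in>T. transcendental_over (T - {t}) t)"

definition infinite_trdeg :: "'a::field itself \<Rightarrow> bool" where
  "infinite_trdeg _ \<longleftrightarrow> (\<exists>T :: 'a set. infinite T \<and> alg_indep T)"

definition alg_closed :: "'a::field itself \<Rightarrow> bool" where
  "alg_closed _ \<longleftrightarrow> (\<forall>p :: 'a poly. degree p \<ge> 1 \<longrightarrow> (\<exists>x. poly p x = 0))"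

definition iso_to_complex :: "'a::field itself \<Rightarrow> bool" where
  "iso_to_complex _ \<longleftrightarrow> (\<exists>f :: 'a \<Rightarrow> complex. bij f \<and> f 1 = 1 \<and>
      (\<forall>x y. f (x + y) = f x + f y) \<and> (\<forall>x y. f (x * y) = f x * f y))"

definition G0 :: "'a::field \<Rightarrow> 'a \<Rightarrow> 'a \<Rightarrow> 'a \<Rightarrow> 'a^3^3" where
  "G0 a b c d = vector [vector [a, b, 0], vector [c, d, 0], vector [0, 0, 1]]"

definition Q0 :: "'a::field \<Rightarrow> 'a^3^3" where
  "Q0 l = vector [vector [l, 0, 0], vector [0, l, 0], vector [0, 0, inverse l]]"

definition P0 :: "'a::field \<Rightarrow> 'a^3^3" where
  "P0 l = vector [vector [l, 0, 0], vector [0, inverse l, 0], vector [0, 0, l]]"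

definition F0 :: "'a::field \<Rightarrow> 'a \<Rightarrow> 'a \<Rightarrow> 'a \<Rightarrow> 'a^3^3" where
  "F0 al be ga de = vector [vector [al, 0, be], vector [0, 1, 0], vector [ga, 0, de]]"

definition Dmat :: "'a::field \<Rightarrow> 'a^3^3" where
  "Dmat f = vector [vector [f, 0, 0], vector [0, f^2, 0], vector [0, 0, f^3]]"

text \<open>Matrix powers (note: the operator ^ on vec types is componentwise, not matrix power).\<close>
primrec mat_pow :: "'a::semiring_1^'n^'n \<Rightarrow> nat \<Rightarrow> 'a^'n^'n" where
  "mat_pow M 0 = mat 1"
| "mat_pow M (Suc n) = M ** mat_pow M n"

definition mat2 :: "'a::field \<Rightarrow> 'a \<Rightarrow> 'a \<Rightarrow> 'a \<Rightarrow> 'a^2^2" where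
  "mat2 a b c d = vector [vector [a, b], vector [c, d]]"

definition gens2 :: "'a::field \<Rightarrow> 'a \<Rightarrow> 'a \<Rightarrow> 'a \<Rightarrow> 'a \<Rightarrow> bool \<Rightarrow> 'a^2^2" where
  "gens2 a b c d l x = (if x then mat2 a b c d else mat2 l 0 0 (inverse l))"

definition rep :: "'a::field \<Rightarrow> 'a \<Rightarrow> 'a \<Rightarrow> 'a \<Rightarrow> 'a \<Rightarrow> 'a \<Rightarrow> 'a \<Rightarrow> 'a \<Rightarrow> 'a \<Rightarrow> 'a
                    \<Rightarrow> gen \<Rightarrow> 'a^3^3" where
  "rep a b c d al be ga de l f g = (case g of
      Gg \<Rightarrow> F0 al be ga de ** G0 a b c d ** matrix_inv (F0 al be ga de)
    | Qg \<Rightarrow> F0 al be ga de ** Q0 l ** matrix_inv (F0 al be ga de)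
    | Pg \<Rightarrow> P0 l
    | Fg \<Rightarrow> Dmat f ** F0 al be ga de ** matrix_inv (Dmat f))"

end

theory Submission
  imports Defs
begin

text \<open>
  Conjugation by F0 turns the images of G, Q, P back into G0, Q0, P0, which fix the splitting
  into the first two and the third coordinate. Hence an F-free word h is sent to F0 Y F0^-1 where
  Y is Q0^m times a block diagonal matrix built from the image of a word in G and P under the
  2x2 representation of hypothesis (2); that hypothesis forces h to be a power of P as soon as
  Y11 = Y33, i.e. as soon as a suitable corner entry of F0 Y F0^-1 vanishes.

  Write an arbitrary word cyclically as h1 F^k1 ... hn F^kn with F-free syllables hi. If some hi is
  a power of P, it commutes with F and a cyclic conjugate has fewer syllables. Otherwise every
  image of hi has a nonzero corner entry and, by hypothesis (1), every F0^ki has a nonzero opposite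
  corner. Conjugating by D, the image of the word times ph^(2n) becomes the value at ph (or at 1/ph)
  of a polynomial matrix over P(a, b, c, d, al, be, ga, de, lm) whose constant term has a nonzero
  diagonal entry; so the image cannot be the identity, ph being transcendental.
\<close>

lemma word_eval_Nil [simp]: "word_eval \<rho> [] = mat 1"
  by (simp add: word_eval_def)

lemma word_eval_Cons [simp]:
  "word_eval \<rho> ((g, s) # w) = (if s then \<rho> g else matrix_inv (\<rho> g)) ** word_eval \<rho> w"
  by (simp add: word_eval_def)

lemma word_eval_append: "word_eval \<rho> (u @ v) = word_eval \<rho> u ** word_eval \<rho> v"
  by (induction u) (auto simp: matrix_mul_assoc)

lemma word_equiv_append_cong:
  "word_equiv E u v \<Longrightarrow> word_equiv E (x @ u @ y) (x @ v @ y)"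
proof (induction rule: word_equiv.induct)
  case (cancel u g s v)
  then show ?case using word_equiv.cancel[of E "x @ u" g s "v @ y"] by simp
next
  case (comm g h u s t v)
  then show ?case using word_equiv.comm[of E g h "x @ u" s t "v @ y"] by simp
qed (auto intro: word_equiv.intros)

lemma word_equiv_append:
  assumes "word_equiv E u u'" "word_equiv E v v'"
  shows "word_equiv E (u @ v) (u' @ v')"
  using word_equiv_append_cong[OF assms(1), of "[]" v] word_equiv_append_cong[OF assms(2), of u' "[]"]
  by (auto intro: word_equiv.trans)

lemma word_equiv_append_left: "word_equiv E u u' \<Longrightarrow> word_equiv E (u @ v) (u' @ v)"
  by (rule word_equiv_append) (auto intro: word_equiv.refl)

lemma word_equiv_append_right: "word_equiv E v v' \<Longrightarrow> word_equiv E (u @ v) (u @ v')"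
  by (rule word_equiv_append) (auto intro: word_equiv.refl)

lemma word_equiv_mono:
  "word_equiv E u v \<Longrightarrow> (\<And>g h. E g h \<Longrightarrow> E' g h) \<Longrightarrow> word_equiv E' u v"
proof (induction rule: word_equiv.induct)
  case (cancel u g s v)
  then show ?case using word_equiv.cancel[of E' u g s v] by simp
next
  case (comm g h u s t v)
  then show ?case using word_equiv.comm[of E' g h u s t v] by simp
qed (auto intro: word_equiv.intros)

lemma word_equiv_map_gens:
  assumes "word_equiv E u v" "\<And>g h. E g h \<Longrightarrow> E' (f g) (f h)"
  shows "word_equiv E' (map (apfst f) u) (map (apfst f) v)"
  using assms
proof (induction rule: word_equiv.induct)
  case (cancel u g s v)
  then show ?case using word_equiv.cancel[of E' "map (apfst f) u" "f g" s] by simp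
next
  case (comm g h u s t v)
  then show ?case using word_equiv.comm[of E' "f g" "f h" "map (apfst f) u" s t] by simp
qed (auto intro: word_equiv.intros)

definition word_inv :: "'g word \<Rightarrow> 'g word" where
  "word_inv w = rev (map (apsnd Not) w)"

lemma word_inv_simps [simp]:
  "word_inv [] = []"
  "word_inv ((g, s) # w) = word_inv w @ [(g, \<not> s)]"
  by (auto simp: word_inv_def)

lemma word_equiv_append_word_inv: "word_equiv E (w @ word_inv w) []"
proof (induction w)
  case Nil
  then show ?case by (simp add: word_equiv.refl)
next
  case (Cons x w)
  obtain g s where x: "x = (g, s)" by fastforce
  have "word_equiv E ([(g, s)] @ (w @ word_inv w) @ [(g, \<not> s)]) ([(g, s)] @ [] @ [(g, \<not> s)])"
    by (rule word_equiv_append_cong[OF Cons])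
  moreover have "word_equiv E ([] @ [(g, s), (g, \<not> s)] @ []) ([] @ [])"
    by (rule word_equiv.cancel)
  ultimately show ?case using x by (auto intro: word_equiv.trans)
qed

lemma word_equiv_rotate:
  assumes "word_equiv E (v @ u) []"
  shows "word_equiv E (u @ v) []"
proof -
  have "word_equiv E (u @ (v @ u) @ word_inv u) (u @ [] @ word_inv u)"
    by (rule word_equiv_append_cong[OF assms])
  then have "word_equiv E ((u @ v) @ (u @ word_inv u)) [] "
    using word_equiv_append_word_inv[of E u] by (auto intro: word_equiv.trans)
  moreover have "word_equiv E ((u @ v) @ (u @ word_inv u)) (u @ v)"
    using word_equiv_append_right[OF word_equiv_append_word_inv, of E "u @ v" u] by simp
  ultimately show ?thesis by (blast intro: word_equiv.trans word_equiv.sym)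
qed

lemma word_equiv_commute_letter:
  assumes "\<forall>y\<in>set v. E g (fst y)"
  shows "word_equiv E ((g, s) # v) (v @ [(g, s)])"
  using assms
proof (induction v)
  case Nil
  then show ?case by (simp add: word_equiv.refl)
next
  case (Cons y v)
  obtain h t where y: "y = (h, t)" by fastforce
  have "word_equiv E ([] @ [(g, s), (h, t)] @ v) ([] @ [(h, t), (g, s)] @ v)"
    using Cons.prems y by (intro word_equiv.comm) auto
  moreover have "word_equiv E ([(h, t)] @ ((g, s) # v) @ []) ([(h, t)] @ (v @ [(g, s)]) @ [])"
    using Cons by (intro word_equiv_append_cong) auto
  ultimately show ?case using y by (auto intro: word_equiv.trans)
qed

lemma word_equiv_commute:
  assumes "\<forall>x\<in>set u. \<forall>y\<in>set v. E (fst x) (fst y)"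
  shows "word_equiv E (u @ v) (v @ u)"
  using assms
proof (induction u)
  case Nil
  then show ?case by (simp add: word_equiv.refl)
next
  case (Cons x u)
  obtain g s where x: "x = (g, s)" by fastforce
  have "word_equiv E ([(g, s)] @ u @ v) ([(g, s)] @ v @ u)"
    using Cons word_equiv_append_cong[of E "u @ v" "v @ u" "[(g, s)]" "[]"] by auto
  moreover have "word_equiv E ([] @ ((g, s) # v) @ u) ([] @ (v @ [(g, s)]) @ u)"
    using Cons.prems x by (intro word_equiv_append_cong word_equiv_commute_letter) auto
  ultimately show ?case using x by (auto intro: word_equiv.trans)
qed

definition exp_sum :: "'g \<Rightarrow> 'g word \<Rightarrow> int" where
  "exp_sum g w = (\<Sum>x\<leftarrow>w. if fst x = g then (if snd x then 1 else -1) else 0)"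

lemma exp_sum_simps [simp]:
  "exp_sum g [] = 0"
  "exp_sum g (x # w) = (if fst x = g then (if snd x then 1 else -1) else 0) + exp_sum g w"
  "exp_sum g (u @ v) = exp_sum g u + exp_sum g v"
  by (auto simp: exp_sum_def)

lemma word_equiv_exp_sum: "word_equiv E u v \<Longrightarrow> exp_sum g u = exp_sum g v"
  by (induction rule: word_equiv.induct) auto

definition gen_pow :: "'g \<Rightarrow> int \<Rightarrow> 'g word" where
  "gen_pow g k = (if 0 \<le> k then replicate (nat k) (g, True) else replicate (nat (- k)) (g, False))"

lemma gen_pow_0 [simp]: "gen_pow g 0 = []"
  by (simp add: gen_pow_def)

lemma set_gen_pow: "x \<in> set (gen_pow g k) \<Longrightarrow> fst x = g"
  by (auto simp: gen_pow_def split: if_splits)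

lemma exp_sum_replicate [simp]:
  "exp_sum h (replicate n (g, s)) = (if h = g then (if s then int n else - int n) else 0)"
  by (induction n) auto

lemma exp_sum_gen_pow [simp]: "exp_sum h (gen_pow g k) = (if h = g then k else 0)"
  by (simp add: gen_pow_def)

lemma gen_pow_Cons:
  assumes "0 \<le> k" "l \<le> 0"
  shows "gen_pow g (k + 1) = (g, True) # gen_pow g k" "gen_pow g (l - 1) = (g, False) # gen_pow g l"
proof -
  have "nat (k + 1) = Suc (nat k)" "nat (- (l - 1)) = Suc (nat (- l))" using assms by auto
  then show "gen_pow g (k + 1) = (g, True) # gen_pow g k" "gen_pow g (l - 1) = (g, False) # gen_pow g l"
    using assms by (auto simp: gen_pow_def)
qed

lemma word_equiv_Cons_gen_pow:
  "word_equiv E ((g, s) # gen_pow g k) (gen_pow g (k + (if s then 1 else -1)))"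
proof -
  have cancel: "word_equiv E ((g, s) # (g, \<not> s) # w) w" for w
    using word_equiv.cancel[of E "[]" g s w] by simp
  consider "s" "0 \<le> k" | "s" "k < 0" | "\<not> s" "0 < k" | "\<not> s" "k \<le> 0"
    by linarith
  then show ?thesis
  proof cases
    case 1
    then show ?thesis using gen_pow_Cons(1)[of k 0 g] by (simp add: word_equiv.refl)
  next
    case 2
    then show ?thesis using cancel gen_pow_Cons(2)[of 0 "k + 1" g] by simp
  next
    case 3
    then show ?thesis using cancel gen_pow_Cons(1)[of "k - 1" 0 g] by simp
  next
    case 4
    then show ?thesis using gen_pow_Cons(2)[of 0 k g] by (simp add: word_equiv.refl)
  qed
qed

lemma word_equiv_gen_pow_exp_sum:
  assumes "\<forall>x\<in>set w. fst x = g"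
  shows "word_equiv E w (gen_pow g (exp_sum g w))"
  using assms
proof (induction w)
  case Nil
  then show ?case by (simp add: word_equiv.refl)
next
  case (Cons x w)
  obtain s where x: "x = (g, s)" using Cons.prems by (cases x) auto
  have "word_equiv E ([(g, s)] @ w @ []) ([(g, s)] @ gen_pow g (exp_sum g w) @ [])"
    using Cons by (intro word_equiv_append_cong) auto
  then show ?case
    using x word_equiv_Cons_gen_pow[of E g s "exp_sum g w"] by (auto intro: word_equiv.trans simp: add.commute)
qed

lemma word_equiv_gen_pow_add: "word_equiv E (gen_pow g k @ gen_pow g l) (gen_pow g (k + l))"
  using word_equiv_gen_pow_exp_sum[of "gen_pow g k @ gen_pow g l" g E] by (auto dest: set_gen_pow)

declare word_equiv.trans [trans]

lemma mat3_mult_nth: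
  "((A::'a::semiring_1^3^3) ** B) $ i $ j = A$i$1 * B$1$j + A$i$2 * B$2$j + A$i$3 * B$3$j"
  by (simp add: matrix_matrix_mult_def sum_3)

lemma mat2_mult_nth: "((A::'a::semiring_1^2^2) ** B) $ i $ j = A$i$1 * B$1$j + A$i$2 * B$2$j"
  by (simp add: matrix_matrix_mult_def sum_2)

lemma mat3_eq_iff: "(A::'a^3^3) = B \<longleftrightarrow> (\<forall>i j. A$i$j = B$i$j)"
  by (simp add: vec_eq_iff)

lemma mat2_eq_iff: "(A::'a^2^2) = B \<longleftrightarrow> (\<forall>i j. A$i$j = B$i$j)"
  by (simp add: vec_eq_iff)

lemma mat_one_nth: "(mat 1 :: 'a::zero_neq_one^'n^'n) $ i $ j = (if i = j then 1 else 0)"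
  by (simp add: mat_def)

lemma mat2_nth [simp]:
  "mat2 a b c d $1$1 = a" "mat2 a b c d $1$2 = b" "mat2 a b c d $2$1 = c" "mat2 a b c d $2$2 = d"
  by (simp_all add: mat2_def)

lemma matrix_inv_unique:
  fixes A :: "'a::semiring_1^'n^'n"
  assumes "A ** B = mat 1" "B ** A = mat 1"
  shows "matrix_inv A = B"
proof -
  let ?C = "matrix_inv A"
  have C: "A ** ?C = mat 1 \<and> ?C ** A = mat 1"
    unfolding matrix_inv_def by (rule someI[of _ B]) (use assms in blast)
  have "?C = ?C ** (A ** B)" using assms(1) by simp
  also have "\<dots> = (?C ** A) ** B" by (simp add: matrix_mul_assoc)
  also have "\<dots> = B" using C by simp
  finally show ?thesis .
qed

lemma matrix_inv_right_left:
  fixes A :: "'a::semiring_1^'n^'n"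
  assumes "invertible A"
  shows "A ** matrix_inv A = mat 1" "matrix_inv A ** A = mat 1"
  using assms matrix_inv_unique unfolding invertible_def by metis+

lemma invertibleI: "(A::'a::semiring_1^'n^'n) ** B = mat 1 \<Longrightarrow> B ** A = mat 1 \<Longrightarrow> invertible A"
  unfolding invertible_def by blast

lemma commute_inverse:
  fixes A A' B :: "'a::semiring_1^'n^'n"
  assumes "A ** A' = mat 1" "A' ** A = mat 1" "B ** A = A ** B"
  shows "B ** A' = A' ** B"
proof -
  have "B ** A' = (A' ** A) ** B ** A'" using assms(2) by simp
  also have "\<dots> = A' ** (B ** A) ** A'" using assms(3) by (simp add: matrix_mul_assoc)
  also have "\<dots> = A' ** B ** (A ** A')" by (simp add: matrix_mul_assoc)
  finally show ?thesis using assms(1) by simp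
qed

lemma matrix_inv_conj:
  fixes A :: "'a::field^'n^'n"
  assumes "A ** A' = mat 1" "A' ** A = mat 1" "B ** B' = mat 1" "B' ** B = mat 1"
  shows "invertible (A ** B ** A')" "matrix_inv (A ** B ** A') = A ** B' ** A'"
proof -
  have 1: "(A ** B ** A') ** (A ** B' ** A') = mat 1"
    using assms by (simp add: matrix_mul_assoc) (simp add: matrix_mul_assoc[symmetric])
  then have 2: "(A ** B' ** A') ** (A ** B ** A') = mat 1"
    by (simp add: matrix_left_right_inverse)
  show "invertible (A ** B ** A')" by (rule invertibleI[OF 1 2])
  show "matrix_inv (A ** B ** A') = A ** B' ** A'" by (rule matrix_inv_unique[OF 1 2])
qed

lemma mat_pow_Suc': "mat_pow M (Suc n) = mat_pow M n ** M"
  by (induction n) (simp_all add: matrix_mul_assoc)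

lemma mat_pow_conj:
  fixes A :: "'a::field^'n^'n"
  assumes "A' ** A = mat 1"
  shows "mat_pow (A ** M ** A') n = A ** mat_pow M n ** A'"
proof (induction n)
  case 0
  then show ?case using assms by (simp add: matrix_left_right_inverse)
next
  case (Suc n)
  then show ?case using assms by (simp add: matrix_mul_assoc) (simp add: matrix_mul_assoc[symmetric])
qed

lemma word_eval_word_equiv:
  fixes \<rho> :: "'g \<Rightarrow> 'a::field^'n^'n"
  assumes "word_equiv E u v" "\<And>g. invertible (\<rho> g)"
    and "\<And>g h. E g h \<Longrightarrow> \<rho> g ** \<rho> h = \<rho> h ** \<rho> g"
  shows "word_eval \<rho> u = word_eval \<rho> v"
  using assms(1)
proof (induction rule: word_equiv.induct)
  case (cancel u g s v)
  have "(if s then \<rho> g else matrix_inv (\<rho> g)) ** (if \<not> s then \<rho> g else matrix_inv (\<rho> g)) = mat 1"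
    using matrix_inv_right_left[OF assms(2)] by auto
  then show ?case by (simp add: word_eval_append matrix_mul_assoc)
next
  case (comm g h u s t v)
  let ?g = "\<rho> g" and ?h = "\<rho> h" and ?g' = "matrix_inv (\<rho> g)" and ?h' = "matrix_inv (\<rho> h)"
  have gh: "?g ** ?h = ?h ** ?g" using assms(3)[OF comm] .
  have g'h: "?h ** ?g' = ?g' ** ?h"
    by (rule commute_inverse[OF matrix_inv_right_left[OF assms(2)] gh[symmetric]])
  have gh': "?g ** ?h' = ?h' ** ?g"
    by (rule commute_inverse[OF matrix_inv_right_left[OF assms(2)] gh])
  have g'h': "?g' ** ?h' = ?h' ** ?g'"
    by (rule commute_inverse[OF matrix_inv_right_left[OF assms(2)] g'h[symmetric]])
  have "(if s then ?g else ?g') ** (if t then ?h else ?h') = (if t then ?h else ?h') ** (if s then ?g else ?g')"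
    using gh g'h gh' g'h' by auto
  then show ?case by (simp add: word_eval_append matrix_mul_assoc)
qed (auto intro: word_equiv.intros)

lemma word_eval_rotate:
  fixes \<rho> :: "'g \<Rightarrow> 'a::field^'n^'n"
  shows "word_eval \<rho> (u @ v) = mat 1 \<Longrightarrow> word_eval \<rho> (v @ u) = mat 1"
  by (simp add: word_eval_append matrix_left_right_inverse)

lemma word_eval_replicate:
  "word_eval \<sigma> (replicate n (g, True)) = mat_pow (\<sigma> g) n"
  "word_eval \<sigma> (replicate n (g, False)) = mat_pow (matrix_inv (\<sigma> g)) n"
  by (induction n) simp_all

lemma word_eval_gen_pow:
  "word_eval \<sigma> (gen_pow g k) =
     (if 0 \<le> k then mat_pow (\<sigma> g) (nat k) else mat_pow (matrix_inv (\<sigma> g)) (nat (- k)))"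
  by (simp add: gen_pow_def word_eval_replicate)

definition F0_inv :: "'a::field \<Rightarrow> 'a \<Rightarrow> 'a \<Rightarrow> 'a \<Rightarrow> 'a^3^3" where
  "F0_inv al be ga de =
     (let \<delta> = al * de - be * ga in
      vector [vector [de / \<delta>, 0, - be / \<delta>], vector [0, 1, 0], vector [- ga / \<delta>, 0, al / \<delta>]])"

definition Dmat_inv :: "'a::field \<Rightarrow> 'a^3^3" where
  "Dmat_inv f = vector [vector [inverse f, 0, 0], vector [0, inverse (f^2), 0], vector [0, 0, inverse (f^3)]]"

lemma F0_inverse:
  assumes "al * de - be * ga \<noteq> 0"
  shows "F0 al be ga de ** F0_inv al be ga de = mat 1" "F0_inv al be ga de ** F0 al be ga de = mat 1"
proof -
  obtain \<delta> where \<delta>: "al * de - be * ga = \<delta>" "\<delta> \<noteq> 0" using assms by blast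
  show "F0 al be ga de ** F0_inv al be ga de = mat 1" "F0_inv al be ga de ** F0 al be ga de = mat 1"
    unfolding F0_inv_def Let_def \<delta>(1) using \<delta>
    by (simp_all add: mat3_eq_iff mat3_mult_nth mat_one_nth F0_def forall_3) (simp_all add: field_simps)
qed

lemma Dmat_inverse:
  assumes "f \<noteq> 0"
  shows "Dmat f ** Dmat_inv f = mat 1" "Dmat_inv f ** Dmat f = mat 1"
  using assms by (auto simp: mat3_eq_iff mat3_mult_nth mat_one_nth Dmat_def Dmat_inv_def forall_3)

lemma Q0_inverse:
  assumes "l \<noteq> 0"
  shows "Q0 l ** Q0 (inverse l) = mat 1" "Q0 (inverse l) ** Q0 l = mat 1"
  using assms by (auto simp: mat3_eq_iff mat3_mult_nth mat_one_nth Q0_def forall_3)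

lemma P0_inverse:
  assumes "l \<noteq> 0"
  shows "P0 l ** P0 (inverse l) = mat 1" "P0 (inverse l) ** P0 l = mat 1"
  using assms by (auto simp: mat3_eq_iff mat3_mult_nth mat_one_nth P0_def forall_3)

lemma G0_inverse:
  assumes "a * d - b * c = \<delta>" "\<delta> \<noteq> 0"
  shows "G0 a b c d ** G0 (d / \<delta>) (- b / \<delta>) (- c / \<delta>) (a / \<delta>) = mat 1"
    "G0 (d / \<delta>) (- b / \<delta>) (- c / \<delta>) (a / \<delta>) ** G0 a b c d = mat 1"
  using assms
  by (simp_all add: mat3_eq_iff mat3_mult_nth mat_one_nth G0_def forall_3) (simp_all add: field_simps)

lemma P0_F0_commute: "P0 l ** F0 al be ga de = F0 al be ga de ** P0 l"
  by (simp add: mat3_eq_iff mat3_mult_nth F0_def P0_def forall_3)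

lemma P0_Dmat_commute: "P0 l ** Dmat f = Dmat f ** P0 l"
  by (simp add: mat3_eq_iff mat3_mult_nth Dmat_def P0_def forall_3)

lemma G0_Q0_commute: "G0 a b c d ** Q0 l = Q0 l ** G0 a b c d"
  by (simp add: mat3_eq_iff mat3_mult_nth G0_def Q0_def forall_3)

lemma Q0_P0_commute: "Q0 l ** P0 l' = P0 l' ** Q0 l"
  by (simp add: mat3_eq_iff mat3_mult_nth Q0_def P0_def forall_3)

lemma mat_pow_Q0: "mat_pow (Q0 l) n = Q0 (l ^ n)"
  by (induction n) (simp_all add: mat3_eq_iff mat3_mult_nth mat_one_nth Q0_def forall_3 inverse_mult_distrib)

lemma mat_pow_P0: "mat_pow (P0 l) n = P0 (l ^ n)"
  by (induction n) (simp_all add: mat3_eq_iff mat3_mult_nth mat_one_nth P0_def forall_3)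

lemma mat_pow_diag2: "mat_pow (mat2 l 0 0 (inverse l)) n = mat2 (l ^ n) 0 0 (inverse l ^ n)"
  by (induction n) (simp_all add: mat2_eq_iff mat2_mult_nth mat_one_nth forall_2)

lemma Dmat_diag: "Dmat f $1$1 = f" "Dmat f $2$2 = f^2" "Dmat f $3$3 = f^3"
  by (simp_all add: Dmat_def)

lemma F0_conj_nth:
  assumes "Y$1$3 = 0" "Y$3$1 = 0" "Y$2$3 = 0" "Y$3$2 = 0"
  shows "(F0 al be ga de ** Y ** F0_inv al be ga de)$1$3 = al * be * (Y$3$3 - Y$1$1) / (al * de - be * ga)"
    "(F0 al be ga de ** Y ** F0_inv al be ga de)$3$1 = ga * de * (Y$1$1 - Y$3$3) / (al * de - be * ga)"
  using assms by (simp_all add: mat3_mult_nth F0_def F0_inv_def Let_def divide_inverse algebra_simps)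

lemma mat_pow_F0_nth:
  "mat_pow (F0 al be ga de) n $1$3 = mat_pow (mat2 al be ga de) n $1$2 \<and>
   mat_pow (F0 al be ga de) n $3$1 = mat_pow (mat2 al be ga de) n $2$1 \<and>
   mat_pow (F0 al be ga de) n $1$1 = mat_pow (mat2 al be ga de) n $1$1 \<and>
   mat_pow (F0 al be ga de) n $3$3 = mat_pow (mat2 al be ga de) n $2$2 \<and>
   mat_pow (F0 al be ga de) n $1$2 = 0 \<and> mat_pow (F0 al be ga de) n $2$1 = 0 \<and>
   mat_pow (F0 al be ga de) n $2$3 = 0 \<and> mat_pow (F0 al be ga de) n $3$2 = 0"
  by (induction n) (simp_all add: mat_one_nth mat3_mult_nth mat2_mult_nth F0_def)

lemma mat_pow_F0_inv_nth:
  "mat_pow (F0_inv al be ga de) n $1$2 = 0 \<and> mat_pow (F0_inv al be ga de) n $2$1 = 0 \<and>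
   mat_pow (F0_inv al be ga de) n $2$3 = 0 \<and> mat_pow (F0_inv al be ga de) n $3$2 = 0"
  by (induction n) (simp_all add: mat_one_nth mat3_mult_nth F0_inv_def Let_def)

lemma mat_pow_inverse:
  fixes A :: "'a::semiring_1^'n^'n"
  assumes "A' ** A = mat 1"
  shows "mat_pow A' n ** mat_pow A n = mat 1"
proof (induction n)
  case (Suc n)
  have "mat_pow A' (Suc n) ** mat_pow A (Suc n) = A' ** (mat_pow A' n ** mat_pow A n) ** A"
    by (simp only: mat_pow.simps(2)[of A' n] mat_pow_Suc'[of A n] matrix_mul_assoc)
  then show ?case using Suc assms by simp
qed simp


lemma corners_of_inverse_nonzero:
  fixes Y Z :: "'a::field^3^3"
  assumes "Y ** Z = mat 1" "Z$1$3 \<noteq> 0" "Z$3$1 \<noteq> 0"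
    and "Y$1$2 = 0" "Y$2$1 = 0" "Y$2$3 = 0" "Y$3$2 = 0"
    and "Z$1$2 = 0" "Z$2$1 = 0" "Z$2$3 = 0" "Z$3$2 = 0"
  shows "Y$1$3 \<noteq> 0 \<and> Y$3$1 \<noteq> 0"
proof -
  have "(Y ** Z)$1$1 = 1" "(Y ** Z)$1$3 = 0" "(Y ** Z)$3$1 = 0" "(Y ** Z)$3$3 = 1"
    using assms(1) by (simp_all add: mat_one_nth)
  then have "Y$1$1 * Z$1$1 + Y$1$3 * Z$3$1 = 1" "Y$1$1 * Z$1$3 + Y$1$3 * Z$3$3 = 0"
    "Y$3$1 * Z$1$1 + Y$3$3 * Z$3$1 = 0" "Y$3$1 * Z$1$3 + Y$3$3 * Z$3$3 = 1"
    using assms(4-) by (simp_all add: mat3_mult_nth)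
  then show ?thesis using assms(2,3) by auto
qed

definition block_diag :: "'a::field^2^2 \<Rightarrow> 'a \<Rightarrow> 'a^3^3" where
  "block_diag M s = vector [vector [M$1$1, M$1$2, 0], vector [M$2$1, M$2$2, 0], vector [0, 0, s]]"

lemma block_diag_nth:
  "block_diag M s $1$1 = M$1$1" "block_diag M s $3$3 = s"
  "block_diag M s $1$3 = 0" "block_diag M s $3$1 = 0" "block_diag M s $2$3 = 0" "block_diag M s $3$2 = 0"
  by (simp_all add: block_diag_def)

lemma block_diag_mult: "block_diag M s ** block_diag N t = block_diag (M ** N) (s * t)"
  by (simp add: mat3_eq_iff mat3_mult_nth mat2_mult_nth block_diag_def forall_3)

lemma block_diag_one: "block_diag (mat 1) 1 = mat 1"
  by (simp add: mat3_eq_iff mat_one_nth block_diag_def forall_3)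

lemma matrix_inv_block_diag:
  assumes "invertible M" "s \<noteq> 0"
  shows "matrix_inv (block_diag M s) = block_diag (matrix_inv M) (inverse s)"
  by (rule matrix_inv_unique)
     (simp_all add: block_diag_mult matrix_inv_right_left[OF assms(1)] assms(2) block_diag_one)

lemma word_eval_gen_pow_Q0:
  assumes "\<rho> g = Q0 l" "l \<noteq> 0"
  shows "word_eval \<rho> (gen_pow g k) = Q0 (l powi k)"
  using assms matrix_inv_unique[OF Q0_inverse[OF assms(2)]]
  by (simp add: word_eval_gen_pow mat_pow_Q0 power_int_def)

lemma word_eval_gen_pow_P0:
  assumes "\<rho> g = P0 l" "l \<noteq> 0"
  shows "word_eval \<rho> (gen_pow g k) = P0 (l powi k)"
  using assms matrix_inv_unique[OF P0_inverse[OF assms(2)]]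
  by (simp add: word_eval_gen_pow mat_pow_P0 power_int_def)

section \<open>Subfields, transcendence and polynomial matrices\<close>

lemma subfield_gen_diff: "x \<in> subfield_gen S \<Longrightarrow> y \<in> subfield_gen S \<Longrightarrow> x - y \<in> subfield_gen S"
  using subfield_gen.add[OF _ subfield_gen.uminus, of x S y] by simp

lemma subfield_gen_divide: "x \<in> subfield_gen S \<Longrightarrow> y \<in> subfield_gen S \<Longrightarrow> x / y \<in> subfield_gen S"
  using subfield_gen.mult[OF _ subfield_gen.inv, of x S y] by (simp add: divide_inverse)

lemma subfield_gen_sum: "(\<And>x. x \<in> A \<Longrightarrow> f x \<in> subfield_gen S) \<Longrightarrow> sum f A \<in> subfield_gen S"
  by (induction A rule: infinite_finite_induct) (auto intro: subfield_gen.intros)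

lemma transcendental_over_nonzero:
  assumes "transcendental_over S x"
  shows "x \<noteq> 0"
proof
  assume "x = 0"
  have "[:0, 1:] \<noteq> (0 :: 'a poly)" "\<forall>i. coeff [:0, 1:] i \<in> subfield_gen S"
    by (auto simp: coeff_pCons split: nat.split intro: subfield_gen.zero subfield_gen.one)
  then have "poly [:0, 1:] x \<noteq> 0" using assms unfolding transcendental_over_def by blast
  then show False using \<open>x = 0\<close> by simp
qed

lemma transcendental_over_inverse:
  assumes "transcendental_over S x"
  shows "transcendental_over S (inverse x)"
  unfolding transcendental_over_def
proof (intro allI impI)
  fix p :: "'a poly"
  assume p: "p \<noteq> 0" "\<forall>i. coeff p i \<in> subfield_gen S"
  have "reflect_poly p \<noteq> 0" using p(1) by simp
  moreover have "\<forall>i. coeff (reflect_poly p) i \<in> subfield_gen S"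
    using p(2) by (simp add: coeff_reflect_poly subfield_gen.zero)
  ultimately have "poly (reflect_poly p) x \<noteq> 0" using assms unfolding transcendental_over_def by blast
  then show "poly p (inverse x) \<noteq> 0"
    using transcendental_over_nonzero[OF assms] by (simp add: poly_reflect_poly_nz)
qed

definition mat_over :: "'a set \<Rightarrow> 'a^'n^'n \<Rightarrow> bool" where
  "mat_over S M \<longleftrightarrow> (\<forall>i j. M$i$j \<in> S)"

lemma mat_over_mult:
  "mat_over (subfield_gen S) A \<Longrightarrow> mat_over (subfield_gen S) B \<Longrightarrow> mat_over (subfield_gen S) (A ** B)"
  unfolding mat_over_def matrix_matrix_mult_def by (auto intro!: subfield_gen_sum subfield_gen.mult)

lemma mat_over_one: "mat_over (subfield_gen S) (mat 1)"
  unfolding mat_over_def by (simp add: mat_one_nth subfield_gen.zero subfield_gen.one)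

lemma mat_over_mat_pow: "mat_over (subfield_gen S) M \<Longrightarrow> mat_over (subfield_gen S) (mat_pow M n)"
  by (induction n) (simp_all add: mat_over_one mat_over_mult)

definition eval_pmat :: "'a::comm_ring_1 \<Rightarrow> 'a poly^'n^'n \<Rightarrow> 'a^'n^'n" where
  "eval_pmat x M = (\<chi> i j. poly (M$i$j) x)"

definition coeff0_pmat :: "'a::comm_ring_1 poly^'n^'n \<Rightarrow> 'a^'n^'n" where
  "coeff0_pmat M = (\<chi> i j. coeff (M$i$j) 0)"

definition const_pmat :: "'a::comm_ring_1^'n^'n \<Rightarrow> 'a poly^'n^'n" where
  "const_pmat C = (\<chi> i j. [:C$i$j:])"

definition scale_mat :: "'a::comm_ring_1 \<Rightarrow> 'a^'n^'n \<Rightarrow> 'a^'n^'n" where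
  "scale_mat c M = (\<chi> i j. c * M$i$j)"

definition pmat_over :: "'a::comm_ring_1 set \<Rightarrow> 'a poly^'n^'n \<Rightarrow> bool" where
  "pmat_over S M \<longleftrightarrow> (\<forall>i j n. coeff (M$i$j) n \<in> S)"

lemma eval_pmat_mult: "eval_pmat x (A ** B) = eval_pmat x A ** eval_pmat x B"
  by (simp add: eval_pmat_def matrix_matrix_mult_def poly_sum vec_eq_iff)

lemma eval_pmat_const [simp]: "eval_pmat x (const_pmat C) = C"
  by (simp add: eval_pmat_def const_pmat_def vec_eq_iff)

lemma eval_pmat_one [simp]: "eval_pmat x (mat 1) = mat 1"
  by (simp add: eval_pmat_def mat_def vec_eq_iff)

lemma coeff0_pmat_mult: "coeff0_pmat (A ** B) = coeff0_pmat A ** coeff0_pmat B"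
  by (simp add: coeff0_pmat_def matrix_matrix_mult_def coeff_sum coeff_mult_0 vec_eq_iff)

lemma coeff0_pmat_const [simp]: "coeff0_pmat (const_pmat C) = C"
  by (simp add: coeff0_pmat_def const_pmat_def vec_eq_iff)

lemma coeff0_pmat_one [simp]: "coeff0_pmat (mat 1) = mat 1"
  by (simp add: coeff0_pmat_def mat_def vec_eq_iff)

lemma scale_mat_mult:
  "scale_mat c A ** B = scale_mat c (A ** B)" "A ** scale_mat c B = scale_mat c (A ** B)"
  by (simp_all add: scale_mat_def matrix_matrix_mult_def vec_eq_iff sum_distrib_left mult_ac)

lemma scale_mat_scale_mat [simp]: "scale_mat c (scale_mat c' A) = scale_mat (c * c') A"
  by (simp add: scale_mat_def vec_eq_iff mult.assoc)

lemma scale_mat_1 [simp]: "scale_mat 1 A = A"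
  by (simp add: scale_mat_def vec_eq_iff)

lemma pmat_over_mult:
  "pmat_over (subfield_gen S) A \<Longrightarrow> pmat_over (subfield_gen S) B \<Longrightarrow> pmat_over (subfield_gen S) (A ** B)"
  unfolding pmat_over_def matrix_matrix_mult_def
  by (auto simp: coeff_sum coeff_mult intro!: subfield_gen_sum subfield_gen.mult)

lemma pmat_over_const: "mat_over (subfield_gen S) C \<Longrightarrow> pmat_over (subfield_gen S) (const_pmat C)"
  unfolding pmat_over_def mat_over_def const_pmat_def
  by (auto simp: coeff_pCons subfield_gen.zero split: nat.split)

lemma pmat_over_one: "pmat_over (subfield_gen S) (mat 1)"
  unfolding pmat_over_def mat_def
  by (auto simp: coeff_pCons subfield_gen.zero subfield_gen.one split: nat.split)

lemma mat_mult_nth_single: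
  fixes A B :: "'a::comm_ring_1^'n^'n"
  assumes "(\<forall>k. k \<noteq> t \<longrightarrow> A$i$k = 0) \<or> (\<forall>k. k \<noteq> t \<longrightarrow> B$k$j = 0)"
  shows "(A ** B)$i$j = A$i$t * B$t$j"
proof -
  have "(A ** B)$i$j = (\<Sum>k\<in>UNIV. A$i$k * B$k$j)"
    by (simp add: matrix_matrix_mult_def)
  also have "\<dots> = (\<Sum>k\<in>UNIV. if k = t then A$i$t * B$t$j else 0)"
    by (rule sum.cong) (use assms in auto)
  finally show ?thesis by simp
qed

definition pmat_prod :: "((('a::comm_ring_1 poly)^'n^'n) \<times> ('a^'n^'n)) list \<Rightarrow> 'a poly^'n^'n" where
  "pmat_prod L = foldr (\<lambda>(H, C) M. H ** const_pmat C ** M) L (mat 1)"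

lemma pmat_prod_simps [simp]:
  "pmat_prod [] = mat 1" "pmat_prod ((H, C) # L) = H ** const_pmat C ** pmat_prod L"
  by (simp_all add: pmat_prod_def)

lemma pmat_over_pmat_prod:
  "\<forall>(H, C)\<in>set L. pmat_over (subfield_gen S) H \<and> mat_over (subfield_gen S) C \<Longrightarrow>
    pmat_over (subfield_gen S) (pmat_prod L)"
  by (induction L) (auto simp: pmat_over_one pmat_over_mult pmat_over_const)


lemma coeff0_pmat_prod_nonzero:
  fixes L :: "((('a::idom poly)^'n^'n) \<times> ('a^'n^'n)) list"
  assumes "L \<noteq> []"
    and "\<forall>(H, C)\<in>set L. coeff0_pmat H $r$s * C$s$r \<noteq> 0 \<and> (\<forall>i j. (i \<noteq> r \<or> j \<noteq> s) \<longrightarrow> coeff0_pmat H $i$j = 0)"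
  shows "coeff0_pmat (pmat_prod L) $r$r \<noteq> 0 \<and> (\<forall>i j. i \<noteq> r \<longrightarrow> coeff0_pmat (pmat_prod L) $i$j = 0)"
  using assms
proof (induction L)
  case (Cons p L)
  obtain H C where p: "p = (H, C)" by fastforce
  have H: "coeff0_pmat H $r$s * C$s$r \<noteq> 0" "\<forall>i j. (i \<noteq> r \<or> j \<noteq> s) \<longrightarrow> coeff0_pmat H $i$j = 0"
    using Cons.prems p by auto
  define W where "W = coeff0_pmat H ** C"
  have W_r: "W$r$j = coeff0_pmat H $r$s * C$s$j" for j
    unfolding W_def by (rule mat_mult_nth_single) (use H in auto)
  have W_i: "i \<noteq> r \<Longrightarrow> W$i$j = 0" for i j
    unfolding W_def matrix_matrix_mult_def using H by simp
  have prod: "coeff0_pmat (pmat_prod (p # L)) = W ** coeff0_pmat (pmat_prod L)"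
    by (simp add: p W_def coeff0_pmat_mult matrix_mul_assoc)
  have "i \<noteq> r \<Longrightarrow> coeff0_pmat (pmat_prod (p # L)) $i$j = 0" for i j
    unfolding prod matrix_matrix_mult_def using W_i by simp
  moreover have "coeff0_pmat (pmat_prod (p # L)) $r$r \<noteq> 0"
  proof (cases "L = []")
    case True
    then show ?thesis using prod W_r H by (simp add: mat_one_nth)
  next
    case False
    then have IH: "coeff0_pmat (pmat_prod L) $r$r \<noteq> 0" "\<forall>i j. i \<noteq> r \<longrightarrow> coeff0_pmat (pmat_prod L) $i$j = 0"
      using Cons by auto
    have "(W ** coeff0_pmat (pmat_prod L))$r$r = W$r$r * coeff0_pmat (pmat_prod L) $r$r"
      by (rule mat_mult_nth_single) (use IH in auto)
    then show ?thesis using prod W_r IH H by simp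
  qed
  ultimately show ?case by blast
qed simp

lemma conj_alternating_product:
  fixes D D' :: "'a::comm_ring_1^'n^'n"
  assumes "D' ** D = mat 1"
  shows "D' ** foldr (\<lambda>(H, C) M. H ** (D ** C ** D') ** M) L (mat 1) ** D =
    foldr (\<lambda>(H, C) M. (D' ** H ** D) ** C ** M) L (mat 1)"
proof (induction L)
  case (Cons p L)
  obtain H C where p: "p = (H, C)" by fastforce
  have "D' ** (H ** (D ** C ** D') ** foldr (\<lambda>(H, C) M. H ** (D ** C ** D') ** M) L (mat 1)) ** D =
    (D' ** H ** D) ** C ** (D' ** foldr (\<lambda>(H, C) M. H ** (D ** C ** D') ** M) L (mat 1) ** D)"
    by (simp only: matrix_mul_assoc)
  then show ?case using Cons p by simp
qed (use assms in simp)

lemma path_edge_iff: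
  "path_edge g h \<longleftrightarrow> (g, h) \<in> {(Gg, Qg), (Qg, Gg), (Qg, Pg), (Pg, Qg), (Pg, Fg), (Fg, Pg)}"
  by (cases g; cases h) (auto simp: path_edge_def doubleton_eq_iff)

locale path_raag_setting =
  fixes a b c d al be ga de lm ph :: "'a::field"
  assumes det1: "a * d - b * c \<noteq> 0"
    and det2: "al * de - be * ga \<noteq> 0"
    and lam: "lm \<noteq> 0"
    and hyp1: "\<forall>n::nat. n \<ge> 1 \<longrightarrow>
                 (mat_pow (mat2 al be ga de) n) $ 1 $ 2 \<noteq> 0 \<and> (mat_pow (mat2 al be ga de) n) $ 2 $ 1 \<noteq> 0"
    and hyp2_free: "free_on (gens2 a b c d lm)"
    and hyp2_top: "\<forall>w. (word_eval (gens2 a b c d lm) w) $ 1 $ 1 = 1 \<longrightarrow>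
                        word_eval (gens2 a b c d lm) w = mat 1"
    and trans: "transcendental_over {a, b, c, d, al, be, ga, de, lm} ph"
begin

abbreviation "\<rho> \<equiv> rep a b c d al be ga de lm ph"
abbreviation "\<sigma> \<equiv> gens2 a b c d lm"
abbreviation "K \<equiv> subfield_gen {a, b, c, d, al, be, ga, de, lm}"
abbreviation "FF \<equiv> F0 al be ga de"
abbreviation "FI \<equiv> F0_inv al be ga de"
abbreviation "DD \<equiv> Dmat ph"
abbreviation "DI \<equiv> Dmat_inv ph"

lemma ph_nonzero: "ph \<noteq> 0"
  using transcendental_over_nonzero[OF trans] .

lemmas FF_inverse = F0_inverse[OF det2]
lemmas DD_inverse = Dmat_inverse[OF ph_nonzero]

lemma matrix_inv_FF: "matrix_inv FF = FI"
  by (rule matrix_inv_unique[OF FF_inverse])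

lemma matrix_inv_DD: "matrix_inv DD = DI"
  by (rule matrix_inv_unique[OF DD_inverse])

text \<open>The images of G, Q, P before conjugation by F0 (P0 commutes with F0); the value at F is junk.\<close>

definition rep0 :: "gen \<Rightarrow> 'a^3^3" where
  "rep0 g = (case g of Gg \<Rightarrow> G0 a b c d | Qg \<Rightarrow> Q0 lm | Pg \<Rightarrow> P0 lm | Fg \<Rightarrow> mat 1)"

definition rep0_inv :: "gen \<Rightarrow> 'a^3^3" where
  "rep0_inv g = (let \<delta> = a * d - b * c in case g of
      Gg \<Rightarrow> G0 (d / \<delta>) (- b / \<delta>) (- c / \<delta>) (a / \<delta>)
    | Qg \<Rightarrow> Q0 (inverse lm) | Pg \<Rightarrow> P0 (inverse lm) | Fg \<Rightarrow> mat 1)"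

lemma rep0_inverse: "rep0 g ** rep0_inv g = mat 1" "rep0_inv g ** rep0 g = mat 1"
  using G0_inverse[OF HOL.refl det1] Q0_inverse[OF lam] P0_inverse[OF lam]
  by (cases g; simp add: rep0_def rep0_inv_def Let_def)+

lemma matrix_inv_rep0: "matrix_inv (rep0 g) = rep0_inv g"
  by (rule matrix_inv_unique[OF rep0_inverse])

lemma rep_Pg: "\<rho> Pg = P0 lm"
  by (simp add: rep_def)

lemma rep_eq:
  "g \<noteq> Fg \<Longrightarrow> \<rho> g = FF ** rep0 g ** FI"
  "\<rho> Fg = DD ** FF ** DI"
proof -
  have "FF ** P0 lm ** FI = P0 lm ** (FF ** FI)"
    by (simp add: P0_F0_commute matrix_mul_assoc)
  then have "FF ** P0 lm ** FI = P0 lm"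
    using FF_inverse(1) by simp
  then show "g \<noteq> Fg \<Longrightarrow> \<rho> g = FF ** rep0 g ** FI"
    by (cases g) (simp_all add: rep_def rep0_def matrix_inv_FF)
qed (simp add: rep_def matrix_inv_DD)

lemma invertible_rep: "invertible (\<rho> g)"
  and matrix_inv_rep:
    "matrix_inv (\<rho> g) = (if g = Fg then DD ** FI ** DI else FF ** rep0_inv g ** FI)"
  using matrix_inv_conj[OF DD_inverse FF_inverse] matrix_inv_conj[OF FF_inverse rep0_inverse, of g]
  by (cases "g = Fg"; simp add: rep_eq)+

lemma rep_commute:
  assumes "path_edge g h"
  shows "\<rho> g ** \<rho> h = \<rho> h ** \<rho> g"
proof -
  have conj_commute: "(FF ** A ** FI) ** (FF ** B ** FI) = (FF ** B ** FI) ** (FF ** A ** FI)"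
    if "A ** B = B ** A" for A B
  proof -
    have "(FF ** A ** FI) ** (FF ** B ** FI) = FF ** A ** (FI ** FF) ** B ** FI"
      by (simp add: matrix_mul_assoc)
    also have "\<dots> = FF ** (A ** B) ** FI" using FF_inverse(2) by (simp add: matrix_mul_assoc)
    also have "\<dots> = FF ** (B ** A) ** FI" using that by simp
    also have "\<dots> = FF ** B ** (FI ** FF) ** A ** FI" using FF_inverse(2) by (simp add: matrix_mul_assoc)
    finally show ?thesis by (simp add: matrix_mul_assoc)
  qed
  have GQ: "\<rho> Gg ** \<rho> Qg = \<rho> Qg ** \<rho> Gg"
    using conj_commute[OF G0_Q0_commute] by (simp add: rep_eq rep0_def)
  have QP: "\<rho> Qg ** \<rho> Pg = \<rho> Pg ** \<rho> Qg"
    using conj_commute[OF Q0_P0_commute] by (simp add: rep_eq rep0_def)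
  have PF: "\<rho> Pg ** \<rho> Fg = \<rho> Fg ** \<rho> Pg"
  proof -
    have "P0 lm ** DI = DI ** P0 lm"
      by (rule commute_inverse[OF DD_inverse P0_Dmat_commute])
    then have "P0 lm ** (DD ** FF ** DI) = DD ** FF ** DI ** P0 lm"
      by (simp add: matrix_mul_assoc P0_Dmat_commute) (simp add: matrix_mul_assoc[symmetric] P0_F0_commute)
    then show ?thesis by (simp only: rep_eq(2) rep_Pg)
  qed
  show ?thesis
    using assms GQ QP PF unfolding path_edge_iff by auto
qed

lemma word_eval_rep_word_equiv: "word_equiv path_edge u v \<Longrightarrow> word_eval \<rho> u = word_eval \<rho> v"
  by (rule word_eval_word_equiv[OF _ invertible_rep rep_commute])

end

section \<open>Words in G, Q and P\<close>

lemma F_free_word_equiv_Q_pow_GP: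
  assumes "Fg \<notin> fst ` set h"
  shows "\<exists>m u. fst ` set u \<subseteq> {Gg, Pg} \<and> word_equiv path_edge h (gen_pow Qg m @ u)"
  using assms
proof (induction h)
  case Nil
  show ?case by (rule exI[of _ 0], rule exI[of _ "[]"]) (simp add: word_equiv.refl)
next
  case (Cons x h)
  obtain m u where u: "fst ` set u \<subseteq> {Gg, Pg}" and eq: "word_equiv path_edge h (gen_pow Qg m @ u)"
    using Cons by auto
  obtain g s where x: "x = (g, s)" by fastforce
  have step: "word_equiv path_edge (x # h) (x # gen_pow Qg m @ u)"
    using word_equiv_append_cong[OF eq, of "[x]" "[]"] by simp
  show ?case
  proof (cases "g = Qg")
    case True
    have "word_equiv path_edge (x # gen_pow Qg m @ u) (gen_pow Qg (m + (if s then 1 else -1)) @ u)"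
      using word_equiv_append_left[OF word_equiv_Cons_gen_pow, of path_edge Qg s m u] x True by simp
    then show ?thesis using step u by (blast intro: word_equiv.trans)
  next
    case False
    then have g: "g \<in> {Gg, Pg}" using Cons.prems x by (cases g) auto
    have "word_equiv path_edge ([x] @ gen_pow Qg m) (gen_pow Qg m @ [x])"
      by (rule word_equiv_commute) (use g x in \<open>auto simp: path_edge_iff dest!: set_gen_pow\<close>)
    from word_equiv_append_left[OF this, of u]
    have "word_equiv path_edge (x # gen_pow Qg m @ u) (gen_pow Qg m @ x # u)" by simp
    then show ?thesis
      using step u g x by (intro exI[of _ m] exI[of _ "x # u"]) (auto intro: word_equiv.trans)
  qed
qed


definition GP_to_bool :: "gen word \<Rightarrow> bool word" where
  "GP_to_bool u = map (apfst (\<lambda>g. g = Gg)) u"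

lemma GP_to_bool_simps [simp]:
  "GP_to_bool [] = []" "GP_to_bool ((g, s) # u) = (g = Gg, s) # GP_to_bool u"
  "GP_to_bool (u @ v) = GP_to_bool u @ GP_to_bool v"
  "GP_to_bool (gen_pow Pg k) = gen_pow False k"
  by (simp_all add: GP_to_bool_def gen_pow_def)

lemma GP_to_bool_inverse:
  "fst ` set u \<subseteq> {Gg, Pg} \<Longrightarrow> map (apfst (\<lambda>b. if b then Gg else Pg)) (GP_to_bool u) = u"
  by (induction u) auto

lemma power_int_double: "(x :: 'a::field) \<noteq> 0 \<Longrightarrow> x powi (2 * m) = x powi m * x powi m"
  using power_int_add[of x m m] by (simp only: mult_2 simp_thms)

lemma power_int_diff_double: "(x :: 'a::field) \<noteq> 0 \<Longrightarrow> x powi (e - 2 * m) = x powi e / (x powi m * x powi m)"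
  by (simp only: power_int_diff[of x e "2 * m"] power_int_double simp_thms)

context path_raag_setting
begin

lemma invertible_gens2: "invertible (\<sigma> x)"
  using hyp2_free unfolding free_on_def by blast

lemma rep0_block_diag: "rep0 Gg = block_diag (\<sigma> True) 1" "rep0 Pg = block_diag (\<sigma> False) lm"
  by (simp_all add: rep0_def mat3_eq_iff block_diag_def G0_def P0_def gens2_def forall_3)

lemma word_eval_rep0_GP:
  assumes "fst ` set u \<subseteq> {Gg, Pg}"
  shows "word_eval rep0 u = block_diag (word_eval \<sigma> (GP_to_bool u)) (lm powi exp_sum Pg u)"
  using assms
proof (induction u)
  case Nil
  then show ?case by (simp add: block_diag_one)
next
  case (Cons x u)
  obtain g s where x: "x = (g, s)" by fastforce
  then have "g = Gg \<or> g = Pg" using Cons.prems by auto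
  moreover have "lm powi ((if s then 1 else -1) + k) = (if s then lm else inverse lm) * lm powi k" for k
    using lam by (simp add: power_int_add)
  ultimately show ?case
    using Cons x lam
    by (auto simp: rep0_block_diag block_diag_mult matrix_inv_block_diag[OF invertible_gens2])
qed

lemma word_eval_F_free:
  assumes "Fg \<notin> fst ` set h"
  shows "word_eval \<rho> h = FF ** word_eval rep0 h ** FI"
  using assms
proof (induction h)
  case Nil
  then show ?case using FF_inverse by simp
next
  case (Cons x h)
  obtain g s where x: "x = (g, s)" by fastforce
  with Cons.prems have g: "g \<noteq> Fg" by force
  have "matrix_inv (\<rho> g) = FF ** matrix_inv (rep0 g) ** FI"
    using matrix_inv_rep[of g] g by (simp add: matrix_inv_rep0)
  then have "(if s then \<rho> g else matrix_inv (\<rho> g)) = FF ** (if s then rep0 g else matrix_inv (rep0 g)) ** FI"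
    using g by (simp add: rep_eq)
  then have "word_eval \<rho> (x # h) =
      FF ** (if s then rep0 g else matrix_inv (rep0 g)) ** (FI ** FF) ** word_eval rep0 h ** FI"
    using Cons x by (simp add: matrix_mul_assoc)
  then show ?case using x FF_inverse by (simp add: matrix_mul_assoc)
qed

lemma word_eval_F_free_form:
  assumes "Fg \<notin> fst ` set h"
  obtains m u where "fst ` set u \<subseteq> {Gg, Pg}" "word_equiv path_edge h (gen_pow Qg m @ u)"
    "word_eval \<rho> h =
       FF ** (Q0 (lm powi m) ** block_diag (word_eval \<sigma> (GP_to_bool u)) (lm powi exp_sum Pg u)) ** FI"
proof -
  obtain m u where u: "fst ` set u \<subseteq> {Gg, Pg}" and eq: "word_equiv path_edge h (gen_pow Qg m @ u)"
    using F_free_word_equiv_Q_pow_GP[OF assms] by blast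
  have F_free: "Fg \<notin> fst ` set (gen_pow Qg m @ u)" using u by (auto dest: set_gen_pow)
  have "word_eval \<rho> (gen_pow Qg m @ u) = FF ** (word_eval rep0 (gen_pow Qg m) ** word_eval rep0 u) ** FI"
    using word_eval_F_free[OF F_free] by (simp only: word_eval_append)
  then have "word_eval \<rho> h = FF ** (word_eval rep0 (gen_pow Qg m) ** word_eval rep0 u) ** FI"
    using word_eval_rep_word_equiv[OF eq] by simp
  moreover have "word_eval rep0 (gen_pow Qg m) = Q0 (lm powi m)"
    using lam by (intro word_eval_gen_pow_Q0) (simp_all add: rep0_def)
  ultimately show ?thesis using that u eq by (simp add: word_eval_rep0_GP)
qed

lemma word_eval_gens2_P_pow: "word_eval \<sigma> (gen_pow False k) = mat2 (lm powi k) 0 0 (inverse (lm powi k))"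
proof -
  have inv: "matrix_inv (mat2 lm 0 0 (inverse lm)) = mat2 (inverse lm) 0 0 (inverse (inverse lm))"
    by (rule matrix_inv_unique) (use lam in \<open>simp_all add: mat2_eq_iff mat2_mult_nth mat_one_nth forall_2\<close>)
  have "mat_pow (mat2 (inverse lm) 0 0 lm) n = mat2 (inverse lm ^ n) 0 0 (lm ^ n)" for n
    using mat_pow_diag2[of "inverse lm" n] by simp
  then show ?thesis
    by (simp add: gens2_def word_eval_gen_pow inv mat_pow_diag2 power_int_def power_inverse)
qed

lemma GP_word_equiv_Nil:
  assumes "fst ` set u \<subseteq> {Gg, Pg}" "word_eval \<sigma> (GP_to_bool u) = mat 1"
  shows "word_equiv (\<lambda>_ _. False) u []"
proof -
  have "word_equiv (\<lambda>_ _. False) (GP_to_bool u) []"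
    using hyp2_free assms(2) unfolding free_on_def by blast
  from word_equiv_map_gens[OF this, of "\<lambda>_ _. False" "\<lambda>b. if b then Gg else Pg"]
  show ?thesis using GP_to_bool_inverse[OF assms(1)] by simp
qed

lemma lm_powi_eq_1: "lm powi k = 1 \<Longrightarrow> k = 0"
proof -
  assume "lm powi k = 1"
  then have "word_eval \<sigma> (gen_pow False k) = mat 1"
    by (simp add: word_eval_gens2_P_pow mat2_eq_iff mat_one_nth forall_2)
  then have "word_equiv (\<lambda>_ _. False) (gen_pow False k) []"
    using hyp2_free unfolding free_on_def by blast
  from word_equiv_exp_sum[OF this, of False] show "k = 0" by simp
qed

lemma GP_word_top_left:
  assumes u: "fst ` set u \<subseteq> {Gg, Pg}"
    and top: "word_eval \<sigma> (GP_to_bool u) $1$1 = lm powi (exp_sum Pg u - 2 * m)"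
  shows "m = 0 \<and> word_equiv path_edge u (gen_pow Pg (exp_sum Pg u))"
proof -
  define e where "e = exp_sum Pg u"
  define u' where "u' = gen_pow Pg (2 * m - e) @ u"
  have u': "fst ` set u' \<subseteq> {Gg, Pg}" using u by (auto simp: u'_def dest: set_gen_pow)
  have "lm powi (2 * m - e) * lm powi (e - 2 * m) = 1"
    using lam by (simp add: power_int_add[symmetric])
  then have "word_eval \<sigma> (GP_to_bool u') $1$1 = 1"
    using top by (simp add: u'_def e_def word_eval_append word_eval_gens2_P_pow mat2_mult_nth)
  then have free: "word_equiv (\<lambda>_ _. False) u' []"
    using hyp2_top GP_word_equiv_Nil[OF u'] by blast
  then have "exp_sum Pg u' = 0" using word_equiv_exp_sum by fastforce
  then have m: "m = 0" by (simp add: u'_def e_def)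
  have "word_equiv path_edge (gen_pow Pg e @ u') (gen_pow Pg e)"
    using word_equiv_append_right[OF word_equiv_mono[OF free], of path_edge "gen_pow Pg e"] by simp
  moreover have "word_equiv path_edge ((gen_pow Pg e @ gen_pow Pg (- e)) @ u) u"
    using word_equiv_append_left[OF word_equiv_gen_pow_add, of path_edge Pg e "- e" u] by simp
  ultimately show ?thesis using m by (auto simp: u'_def e_def intro: word_equiv.trans word_equiv.sym)
qed

lemma be_nonzero: "be \<noteq> 0" and ga_nonzero: "ga \<noteq> 0"
  using hyp1 by (auto dest: spec[of _ 1])

lemma al_or_de_nonzero: "al \<noteq> 0 \<or> de \<noteq> 0"
proof -
  have "mat_pow (mat2 al be ga de) 2 $1$2 \<noteq> 0" using hyp1 by auto
  then show ?thesis by (auto simp: numeral_2_eq_2 mat2_mult_nth)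
qed

text \<open>The pivot is the corner entry of F0 Y F0^-1 that detects Y11 \<noteq> Y33 (see F0_conj_nth):
  (1,3) when al \<noteq> 0, otherwise (3,1), as then de \<noteq> 0.\<close>

definition piv_row :: 3 where "piv_row = (if al \<noteq> 0 then 1 else 3)"
definition piv_col :: 3 where "piv_col = (if al \<noteq> 0 then 3 else 1)"

lemma piv_row_neq_col: "piv_row \<noteq> piv_col"
  by (simp add: piv_row_def piv_col_def)

lemma F0_conj_pivot_eq_0:
  assumes "Y$1$3 = 0" "Y$3$1 = 0" "Y$2$3 = 0" "Y$3$2 = 0" "(FF ** Y ** FI) $ piv_row $ piv_col = 0"
  shows "Y$1$1 = Y$3$3"
proof (cases "al = 0")
  case False
  then have "al * be * (Y$3$3 - Y$1$1) / (al * de - be * ga) = 0"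
    using assms(5) F0_conj_nth(1)[OF assms(1-4), of al be ga de] unfolding piv_row_def piv_col_def by simp
  then show ?thesis using False be_nonzero det2 by simp
next
  case True
  then have "ga * de * (Y$1$1 - Y$3$3) / (al * de - be * ga) = 0"
    using assms(5) F0_conj_nth(2)[OF assms(1-4), of al be ga de] unfolding piv_row_def piv_col_def by simp
  then show ?thesis using True al_or_de_nonzero ga_nonzero det2 by simp
qed

lemma F_free_pivot_eq_0:
  assumes "Fg \<notin> fst ` set h" "word_eval \<rho> h $ piv_row $ piv_col = 0"
  shows "\<exists>p. word_equiv path_edge h (gen_pow Pg p)"
proof -
  obtain m u where u: "fst ` set u \<subseteq> {Gg, Pg}" and eq: "word_equiv path_edge h (gen_pow Qg m @ u)"
    and ev: "word_eval \<rho> h =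
      FF ** (Q0 (lm powi m) ** block_diag (word_eval \<sigma> (GP_to_bool u)) (lm powi exp_sum Pg u)) ** FI"
    by (rule word_eval_F_free_form[OF assms(1)])
  define U where "U = word_eval \<sigma> (GP_to_bool u)"
  define e where "e = exp_sum Pg u"
  have "(Q0 (lm powi m) ** block_diag U (lm powi e))$1$1 = (Q0 (lm powi m) ** block_diag U (lm powi e))$3$3"
    by (rule F0_conj_pivot_eq_0) (use assms(2) ev in \<open>simp_all add: U_def e_def mat3_mult_nth Q0_def block_diag_nth\<close>)
  then have top: "lm powi m * U$1$1 = inverse (lm powi m) * lm powi e"
    by (simp add: mat3_mult_nth Q0_def block_diag_def)
  have "U$1$1 = inverse (lm powi m) * (lm powi m * U$1$1)"
    using lam by simp
  also have "\<dots> = lm powi e / (lm powi m * lm powi m)"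
    unfolding top by (simp add: divide_inverse inverse_mult_distrib mult_ac)
  also have "\<dots> = lm powi (e - 2 * m)"
    by (simp only: power_int_diff_double[OF lam])
  finally have "U$1$1 = lm powi (e - 2 * m)" .
  then obtain "m = 0" "word_equiv path_edge u (gen_pow Pg e)"
    using GP_word_top_left[OF u] by (auto simp: U_def e_def)
  then show ?thesis using eq by (auto intro: word_equiv.trans)
qed

lemma F_free_faithful:
  assumes "Fg \<notin> fst ` set h" "word_eval \<rho> h = mat 1"
  shows "word_equiv path_edge h []"
proof -
  obtain p where p: "word_equiv path_edge h (gen_pow Pg p)"
    using F_free_pivot_eq_0[OF assms(1)] assms(2) piv_row_neq_col by (auto simp: mat_one_nth)
  have "word_eval \<rho> (gen_pow Pg p) = P0 (lm powi p)"
    using lam by (intro word_eval_gen_pow_P0) (simp add: rep_Pg)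
  then have "P0 (lm powi p) = mat 1"
    using word_eval_rep_word_equiv[OF p] assms(2) by simp
  then have "lm powi p = 1" by (metis P0_def mat_one_nth vector_3(1))
  then have "p = 0" by (rule lm_powi_eq_1)
  then show ?thesis using p by simp
qed

end

section \<open>Words containing F\<close>

context path_raag_setting
begin

definition F_pow :: "int \<Rightarrow> 'a^3^3" where
  "F_pow k = (if 0 \<le> k then mat_pow FF (nat k) else mat_pow FI (nat (- k)))"

lemma word_eval_F_pow: "word_eval \<rho> (gen_pow Fg k) = DD ** F_pow k ** DI"
  using matrix_inv_rep[of Fg]
  by (simp add: word_eval_gen_pow F_pow_def rep_eq mat_pow_conj[OF DD_inverse(2)])

lemma F_pow_corners_nonzero:
  assumes "k \<noteq> 0"
  shows "F_pow k $1$3 \<noteq> 0 \<and> F_pow k $3$1 \<noteq> 0"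
proof -
  have FF: "mat_pow FF n $1$3 \<noteq> 0 \<and> mat_pow FF n $3$1 \<noteq> 0" if "n \<ge> 1" for n
    using hyp1 that mat_pow_F0_nth[of al be ga de n] by auto
  have "mat_pow FI n $1$3 \<noteq> 0 \<and> mat_pow FI n $3$1 \<noteq> 0" if "n \<ge> 1" for n
    using corners_of_inverse_nonzero[OF mat_pow_inverse[OF FF_inverse(2)]] FF[OF that]
      mat_pow_F0_nth[of al be ga de n] mat_pow_F0_inv_nth[of al be ga de n] by auto
  then show ?thesis using FF assms by (auto simp: F_pow_def)
qed

lemma K_gens: "a \<in> K" "b \<in> K" "c \<in> K" "d \<in> K" "al \<in> K" "be \<in> K" "ga \<in> K" "de \<in> K" "lm \<in> K"
  by (simp_all add: subfield_gen.base)

lemmas K_closed = K_gens subfield_gen.zero subfield_gen.one subfield_gen.add subfield_gen.uminus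
  subfield_gen.mult subfield_gen.inv subfield_gen_diff subfield_gen_divide

lemma mat_over_FF: "mat_over K FF" and mat_over_FI: "mat_over K FI"
  unfolding mat_over_def forall_3 F0_def F0_inv_def Let_def
  by (simp_all only: vector_3; intro conjI K_closed)+

lemma mat_over_rep0: "mat_over K (rep0 g)" and mat_over_rep0_inv: "mat_over K (rep0_inv g)"
  unfolding mat_over_def forall_3
  by (cases g; simp only: rep0_def rep0_inv_def Let_def gen.case G0_def Q0_def P0_def mat_one_nth vector_3;
      intro conjI K_closed; simp add: K_closed)+

lemma mat_over_word_eval_F_free: "Fg \<notin> fst ` set h \<Longrightarrow> mat_over K (word_eval \<rho> h)"
proof -
  have "mat_over K (word_eval rep0 w)" for w
  proof (induction w)
    case (Cons x w)
    then show ?case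
      using mat_over_rep0 mat_over_rep0_inv by (cases x) (simp add: matrix_inv_rep0 mat_over_mult)
  qed (simp add: mat_over_one)
  then show "Fg \<notin> fst ` set h \<Longrightarrow> mat_over K (word_eval \<rho> h)"
    by (simp add: word_eval_F_free mat_over_mult mat_over_FF mat_over_FI)
qed

lemma mat_over_F_pow: "mat_over K (F_pow k)"
  by (simp add: F_pow_def mat_over_mat_pow mat_over_FF mat_over_FI)

lemma alternating_product_ne_one_lift:
  fixes x :: 'a and r s :: 3 and lift :: "'a^3^3 \<Rightarrow> 'a poly^3^3"
  assumes tr: "transcendental_over {a, b, c, d, al, be, ga, de, lm} x"
    and lift_eval: "\<And>H. eval_pmat x (lift H) = scale_mat (x^2) (DI ** H ** DD)"
    and lift_over: "\<And>H. mat_over K H \<Longrightarrow> pmat_over K (lift H)"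
    and lift_coeff0: "\<And>H. coeff0_pmat (lift H) $r$s = H$r$s"
      "\<And>H i j. i \<noteq> r \<or> j \<noteq> s \<Longrightarrow> coeff0_pmat (lift H) $i$j = 0"
    and L: "L \<noteq> []" "\<forall>(H, C)\<in>set L. mat_over K H \<and> mat_over K C \<and> H$r$s \<noteq> 0 \<and> C$s$r \<noteq> 0"
  shows "foldr (\<lambda>(H, C) M. H ** (DD ** C ** DI) ** M) L (mat 1) \<noteq> mat 1"
proof
  assume one: "foldr (\<lambda>(H, C) M. H ** (DD ** C ** DI) ** M) L (mat 1) = mat 1"
  define P where "P = pmat_prod (map (apfst lift) L)"
  define n where "n = 2 * length L"
  have "eval_pmat x (pmat_prod (map (apfst lift) L')) =
      scale_mat (x ^ (2 * length L')) (foldr (\<lambda>(H, C) M. (DI ** H ** DD) ** C ** M) L' (mat 1))" for L'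
    by (induction L') (auto simp: eval_pmat_mult lift_eval scale_mat_mult power_add power2_eq_square mult_ac)
  then have "eval_pmat x P = scale_mat (x ^ n) (mat 1)"
    using conj_alternating_product[OF DD_inverse(2), of L] one DD_inverse(2)
    by (simp add: P_def n_def)
  then have P_eval: "poly (P$r$r) x = x ^ n"
    by (simp add: eval_pmat_def scale_mat_def mat_def vec_eq_iff)
  have corner: "\<forall>(H, C)\<in>set (map (apfst lift) L).
      coeff0_pmat H $r$s * C$s$r \<noteq> 0 \<and> (\<forall>i j. (i \<noteq> r \<or> j \<noteq> s) \<longrightarrow> coeff0_pmat H $i$j = 0)"
    using L(2) lift_coeff0 by (auto simp: split_beta)
  have "coeff0_pmat P $r$r \<noteq> 0"
    using coeff0_pmat_prod_nonzero[OF _ corner] L(1) by (simp add: P_def)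
  moreover have "n \<noteq> 0" using L(1) by (simp add: n_def)
  ultimately have "coeff (P$r$r - monom 1 n) 0 \<noteq> 0"
    by (simp add: coeff0_pmat_def coeff_monom)
  then have "P$r$r - monom 1 n \<noteq> 0" by auto
  moreover have "pmat_over K P"
    unfolding P_def using L(2) lift_over by (intro pmat_over_pmat_prod) (auto simp: split_beta)
  then have "coeff (P$r$r - monom 1 n) i \<in> K" for i
    unfolding pmat_over_def coeff_diff coeff_monom
    by (intro subfield_gen_diff) (simp_all add: subfield_gen.zero subfield_gen.one)
  ultimately have "poly (P$r$r - monom 1 n) x \<noteq> 0"
    using tr unfolding transcendental_over_def by blast
  then show False using P_eval by (simp add: poly_monom)
qed

text \<open>D^-1 H D has (i,j) entry ph^(j - i) H_ij, so ph^2 D^-1 H D and ph^-2 D^-1 H D are the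
  values at ph and at 1/ph of polynomial matrices.\<close>

definition lift_pos :: "'a^3^3 \<Rightarrow> 'a poly^3^3" where
  "lift_pos H = vector [vector [monom (H$1$1) 2, monom (H$1$2) 3, monom (H$1$3) 4],
                        vector [monom (H$2$1) 1, monom (H$2$2) 2, monom (H$2$3) 3],
                        vector [monom (H$3$1) 0, monom (H$3$2) 1, monom (H$3$3) 2]]"

definition lift_neg :: "'a^3^3 \<Rightarrow> 'a poly^3^3" where
  "lift_neg H = vector [vector [monom (H$1$1) 2, monom (H$1$2) 1, monom (H$1$3) 0],
                        vector [monom (H$2$1) 3, monom (H$2$2) 2, monom (H$2$3) 1],
                        vector [monom (H$3$1) 4, monom (H$3$2) 3, monom (H$3$3) 2]]"

lemma DD_conj_nth: "(DI ** H ** DD)$i$j = inverse (DD$i$i) * H$i$j * DD$j$j"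
proof -
  have "k \<noteq> l \<Longrightarrow> DD$k$l = 0 \<and> DI$k$l = 0" for k l :: 3
    using exhaust_3[of k] exhaust_3[of l] by (auto simp: Dmat_def Dmat_inv_def)
  then have "(DI ** H ** DD)$i$j = (DI ** H)$i$j * DD$j$j" "(DI ** H)$i$j = DI$i$i * H$i$j"
    by (auto intro!: mat_mult_nth_single)
  then have "(DI ** H ** DD)$i$j = DI$i$i * H$i$j * DD$j$j" by simp
  moreover have "DI$i$i = inverse (DD$i$i)"
    using exhaust_3[of i] by (auto simp: Dmat_inv_def Dmat_def)
  ultimately show ?thesis by simp
qed

lemma eval_lift_pos: "eval_pmat ph (lift_pos H) = scale_mat (ph^2) (DI ** H ** DD)"
  using ph_nonzero
  by (simp add: mat3_eq_iff forall_3 eval_pmat_def scale_mat_def lift_pos_def DD_conj_nth Dmat_diag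
      poly_monom field_simps power_eq_if)

lemma eval_lift_neg: "eval_pmat (inverse ph) (lift_neg H) = scale_mat ((inverse ph)^2) (DI ** H ** DD)"
  using ph_nonzero
  by (simp add: mat3_eq_iff forall_3 eval_pmat_def scale_mat_def lift_neg_def DD_conj_nth Dmat_diag
      poly_monom field_simps power_eq_if)

lemma pmat_over_lift: "mat_over K H \<Longrightarrow> pmat_over K (lift_pos H)" "mat_over K H \<Longrightarrow> pmat_over K (lift_neg H)"
  unfolding pmat_over_def mat_over_def lift_pos_def lift_neg_def forall_3
  by (simp_all add: coeff_monom subfield_gen.zero)

lemma coeff0_lift_pos: "coeff0_pmat (lift_pos H) $3$1 = H$3$1" "i \<noteq> 3 \<or> j \<noteq> 1 \<Longrightarrow> coeff0_pmat (lift_pos H) $i$j = 0"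
  using exhaust_3[of i] exhaust_3[of j] by (auto simp: coeff0_pmat_def lift_pos_def coeff_monom)

lemma coeff0_lift_neg: "coeff0_pmat (lift_neg H) $1$3 = H$1$3" "i \<noteq> 1 \<or> j \<noteq> 3 \<Longrightarrow> coeff0_pmat (lift_neg H) $i$j = 0"
  using exhaust_3[of i] exhaust_3[of j] by (auto simp: coeff0_pmat_def lift_neg_def coeff_monom)

lemma alternating_product_ne_one:
  assumes "L \<noteq> []"
    and "\<forall>(H, C)\<in>set L. mat_over K H \<and> mat_over K C \<and> H $ piv_row $ piv_col \<noteq> 0 \<and> C $ piv_col $ piv_row \<noteq> 0"
  shows "foldr (\<lambda>(H, C) M. H ** (DD ** C ** DI) ** M) L (mat 1) \<noteq> mat 1"
proof (cases "al = 0")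
  case True
  then have "piv_row = 3" "piv_col = 1" unfolding piv_row_def piv_col_def by simp_all
  then show ?thesis
    using alternating_product_ne_one_lift[OF trans eval_lift_pos pmat_over_lift(1) coeff0_lift_pos assms(1)]
      assms(2) by simp
next
  case False
  then have "piv_row = 1" "piv_col = 3" unfolding piv_row_def piv_col_def by simp_all
  then show ?thesis
    using alternating_product_ne_one_lift[OF transcendental_over_inverse[OF trans] eval_lift_neg
        pmat_over_lift(2) coeff0_lift_neg assms(1)]
      assms(2) by simp
qed

end

section \<open>Syllable decomposition\<close>

definition syllable_word :: "(gen word \<times> int) list \<Rightarrow> gen word" where
  "syllable_word L = concat (map (\<lambda>(h, k). h @ gen_pow Fg k) L)"

lemma syllable_word_simps [simp]:
  "syllable_word [] = []"
  "syllable_word ((h, k) # L) = h @ gen_pow Fg k @ syllable_word L"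
  "syllable_word (L @ L') = syllable_word L @ syllable_word L'"
  by (simp_all add: syllable_word_def)

definition F_free_syllables :: "(gen word \<times> int) list \<Rightarrow> bool" where
  "F_free_syllables L \<longleftrightarrow> (\<forall>(h, k)\<in>set L. Fg \<notin> fst ` set h)"

lemma F_free_syllables_simps [simp]:
  "F_free_syllables []"
  "F_free_syllables ((h, k) # L) \<longleftrightarrow> Fg \<notin> fst ` set h \<and> F_free_syllables L"
  "F_free_syllables (L @ L') \<longleftrightarrow> F_free_syllables L \<and> F_free_syllables L'"
  by (auto simp: F_free_syllables_def)

lemma syllable_word_exists: "\<exists>L. F_free_syllables L \<and> w = syllable_word L"
proof (induction w)
  case Nil
  show ?case by (rule exI[of _ "[]"]) simp
next
  case (Cons x w)
  then obtain L where L: "F_free_syllables L" "w = syllable_word L" by blast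
  obtain g s where x: "x = (g, s)" by fastforce
  show ?case
  proof (cases "g = Fg")
    case True
    have "gen_pow Fg (if s then 1 else -1) = [(Fg, s)]" by (simp add: gen_pow_def)
    then show ?thesis using L x True by (intro exI[of _ "([], if s then 1 else -1) # L"]) simp
  next
    case False
    show ?thesis
    proof (cases L)
      case Nil
      then show ?thesis using L x False by (intro exI[of _ "[([x], 0)]"]) simp
    next
      case (Cons y L')
      obtain h k where y: "y = (h, k)" by fastforce
      show ?thesis using L x False Cons y by (intro exI[of _ "(x # h, k) # L'"]) simp
    qed
  qed
qed

lemma word_equiv_absorb_P_pow:
  assumes "word_equiv path_edge h (gen_pow Pg p)"
  shows "word_equiv path_edge (hl @ gen_pow Fg kl @ h @ gen_pow Fg k @ w)
    ((hl @ gen_pow Pg p) @ gen_pow Fg (kl + k) @ w)"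
proof -
  have PF: "word_equiv path_edge (gen_pow Fg kl @ gen_pow Pg p) (gen_pow Pg p @ gen_pow Fg kl)"
    by (rule word_equiv_commute) (auto simp: path_edge_iff dest!: set_gen_pow)
  have "word_equiv path_edge (hl @ gen_pow Fg kl @ h @ gen_pow Fg k @ w)
      (hl @ gen_pow Fg kl @ gen_pow Pg p @ gen_pow Fg k @ w)"
    using word_equiv_append_cong[OF assms, of "hl @ gen_pow Fg kl" "gen_pow Fg k @ w"] by simp
  also have "word_equiv path_edge \<dots> (hl @ gen_pow Pg p @ gen_pow Fg kl @ gen_pow Fg k @ w)"
    using word_equiv_append_cong[OF PF, of hl "gen_pow Fg k @ w"] by simp
  also have "word_equiv path_edge \<dots> (hl @ gen_pow Pg p @ gen_pow Fg (kl + k) @ w)"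
    using word_equiv_append_cong[OF word_equiv_gen_pow_add[of path_edge Fg kl k], of "hl @ gen_pow Pg p" w]
    by simp
  finally show ?thesis by simp
qed

context path_raag_setting
begin

lemma P_pow_F_pow_ne_one:
  assumes "k \<noteq> 0"
  shows "word_eval \<rho> (gen_pow Pg p @ gen_pow Fg k) \<noteq> mat 1"
proof
  assume one: "word_eval \<rho> (gen_pow Pg p @ gen_pow Fg k) = mat 1"
  have "word_eval \<rho> (gen_pow Pg p) = P0 (lm powi p)"
    using lam by (intro word_eval_gen_pow_P0) (simp add: rep_Pg)
  then have one': "DD ** (P0 (lm powi p) ** F_pow k) ** DI = mat 1"
    using one by (simp add: word_eval_append word_eval_F_pow matrix_mul_assoc P0_Dmat_commute)
  have "DI ** (DD ** Y ** DI) ** DD = Y" for Y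
    using DD_inverse(2) by (simp add: matrix_mul_assoc) (simp add: matrix_mul_assoc[symmetric])
  then have "P0 (lm powi p) ** F_pow k = DI ** mat 1 ** DD"
    by (metis one')
  then have "P0 (lm powi p) ** F_pow k = mat 1"
    using DD_inverse(2) by simp
  moreover have "(P0 (lm powi p) ** F_pow k)$1$3 = lm powi p * F_pow k $1$3"
    by (simp add: mat3_mult_nth P0_def)
  ultimately have "lm powi p * F_pow k $1$3 = 0"
    by (simp add: mat_one_nth)
  then show False using F_pow_corners_nonzero[OF assms] lam by simp
qed

lemma F_pow_pivot_nonzero: "k \<noteq> 0 \<Longrightarrow> F_pow k $ piv_col $ piv_row \<noteq> 0"
  using F_pow_corners_nonzero unfolding piv_row_def piv_col_def by auto

lemma word_eval_syllable_word:
  "word_eval \<rho> (syllable_word L) =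
     foldr (\<lambda>(H, C) M. H ** (DD ** C ** DI) ** M) (map (\<lambda>(h, k). (word_eval \<rho> h, F_pow k)) L) (mat 1)"
  by (induction L) (auto simp: word_eval_append word_eval_F_pow matrix_mul_assoc)

definition same_triviality :: "gen word \<Rightarrow> gen word \<Rightarrow> bool" where
  "same_triviality w w' \<longleftrightarrow>
     (word_eval \<rho> w = mat 1 \<longleftrightarrow> word_eval \<rho> w' = mat 1) \<and>
     (word_equiv path_edge w [] \<longleftrightarrow> word_equiv path_edge w' [])"

lemma same_triviality_word_equiv: "word_equiv path_edge w w' \<Longrightarrow> same_triviality w w'"
  unfolding same_triviality_def
  using word_eval_rep_word_equiv word_equiv.sym word_equiv.trans by metis

lemma same_triviality_rotate: "same_triviality (u @ v) (v @ u)"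
  unfolding same_triviality_def using word_eval_rotate word_equiv_rotate by blast

lemma same_triviality_trans [trans]: "same_triviality w w' \<Longrightarrow> same_triviality w' w'' \<Longrightarrow> same_triviality w w''"
  unfolding same_triviality_def by blast

lemma same_triviality_rotate_syllables:
  "same_triviality (syllable_word (L1 @ x # L2)) (syllable_word (x # L2 @ L1))"
  using same_triviality_rotate[of "syllable_word L1" "syllable_word (x # L2)"]
  by (simp add: syllable_word_def)

lemma syllable_word_reduce_zero_exponent:
  assumes "F_free_syllables L" "(h, 0) \<in> set L"
    and "word_eval \<rho> (syllable_word L) = mat 1" "\<not> word_equiv path_edge (syllable_word L) []"
  obtains L' where "F_free_syllables L'" "length L' < length L"
    "same_triviality (syllable_word L) (syllable_word L')"
proof -
  obtain L1 L2 where L: "L = L1 @ (h, 0) # L2" using assms(2) by (meson split_list)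
  have rot: "same_triviality (syllable_word L) (syllable_word ((h, 0) # L2 @ L1))"
    unfolding L by (rule same_triviality_rotate_syllables)
  show ?thesis
  proof (cases "L2 @ L1")
    case Nil
    then show ?thesis
      using rot assms L F_free_faithful[of h] unfolding same_triviality_def by auto
  next
    case (Cons y M)
    obtain h2 k2 where y: "y = (h2, k2)" by fastforce
    have "F_free_syllables ((h2, k2) # M)"
      using assms(1) unfolding L by (simp add: Cons[symmetric] y[symmetric])
    moreover have "length ((h @ h2, k2) # M) < length L"
      using arg_cong[OF Cons, of length] L by simp
    ultimately show ?thesis
      using rot assms(1) Cons y L by (intro that[of "(h @ h2, k2) # M"]) auto
  qed
qed

lemma syllable_word_reduce_P_pow:
  assumes "F_free_syllables L" "(h, k) \<in> set L" "k \<noteq> 0" "word_eval \<rho> h $ piv_row $ piv_col = 0"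
    and "word_eval \<rho> (syllable_word L) = mat 1"
  obtains L' where "F_free_syllables L'" "length L' < length L"
    "same_triviality (syllable_word L) (syllable_word L')"
proof -
  obtain L1 L2 where L: "L = L1 @ (h, k) # L2" using assms(2) by (meson split_list)
  have "Fg \<notin> fst ` set h" using assms(1) L by simp
  then obtain p where p: "word_equiv path_edge h (gen_pow Pg p)"
    using F_free_pivot_eq_0 assms(4) by blast
  have rot: "same_triviality (syllable_word L) (syllable_word ((h, k) # L2 @ L1))"
    unfolding L by (rule same_triviality_rotate_syllables)
  show ?thesis
  proof (cases "L2 @ L1" rule: rev_cases)
    case Nil
    have "same_triviality (syllable_word L) (h @ gen_pow Fg k)"
      using rot Nil by simp
    also have "same_triviality \<dots> (gen_pow Pg p @ gen_pow Fg k)"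
      by (rule same_triviality_word_equiv[OF word_equiv_append_left[OF p]])
    finally show ?thesis
      using assms(5) P_pow_F_pow_ne_one[OF assms(3)] unfolding same_triviality_def by blast
  next
    case (snoc M y)
    obtain hl kl where y: "y = (hl, kl)" by fastforce
    have "same_triviality (syllable_word L) (syllable_word ((h, k) # M @ [(hl, kl)]))"
      using rot snoc y by simp
    also have "same_triviality \<dots> (hl @ gen_pow Fg kl @ h @ gen_pow Fg k @ syllable_word M)"
      using same_triviality_rotate[of "h @ gen_pow Fg k @ syllable_word M" "hl @ gen_pow Fg kl"] by simp
    also have "same_triviality \<dots> (syllable_word ((hl @ gen_pow Pg p, kl + k) # M))"
      using same_triviality_word_equiv[OF word_equiv_absorb_P_pow[OF p]] by simp
    finally have "same_triviality (syllable_word L) (syllable_word ((hl @ gen_pow Pg p, kl + k) # M))" .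
    moreover have "F_free_syllables (M @ [(hl, kl)])"
      using assms(1) unfolding L by (simp add: snoc[symmetric] y[symmetric])
    moreover have "length ((hl @ gen_pow Pg p, kl + k) # M) < length L"
      using arg_cong[OF snoc, of length] L by simp
    ultimately show ?thesis
      by (intro that[of "(hl @ gen_pow Pg p, kl + k) # M"]) (auto dest: set_gen_pow)
  qed
qed

lemma syllable_word_ne_one:
  assumes "F_free_syllables L" "L \<noteq> []"
    and "\<forall>(h, k)\<in>set L. k \<noteq> 0 \<and> word_eval \<rho> h $ piv_row $ piv_col \<noteq> 0"
  shows "word_eval \<rho> (syllable_word L) \<noteq> mat 1"
  unfolding word_eval_syllable_word using assms
  by (intro alternating_product_ne_one)
     (auto simp: F_free_syllables_def split_beta mat_over_word_eval_F_free mat_over_F_pow F_pow_pivot_nonzero)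

lemma syllable_word_faithful:
  assumes "F_free_syllables L" "word_eval \<rho> (syllable_word L) = mat 1"
  shows "word_equiv path_edge (syllable_word L) []"
  using assms
proof (induction "length L" arbitrary: L rule: less_induct)
  case less
  show ?case
  proof (rule ccontr)
    assume nontrivial: "\<not> word_equiv path_edge (syllable_word L) []"
    then have "L \<noteq> []" by (auto intro: word_equiv.refl)
    consider (zero) h where "(h, 0) \<in> set L"
      | (pivot_zero) h k where "(h, k) \<in> set L" "k \<noteq> 0" "word_eval \<rho> h $ piv_row $ piv_col = 0"
      | (generic) "\<forall>(h, k)\<in>set L. k \<noteq> 0 \<and> word_eval \<rho> h $ piv_row $ piv_col \<noteq> 0"
      by fastforce
    then obtain L' where "F_free_syllables L'" "length L' < length L"
      "same_triviality (syllable_word L) (syllable_word L')"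
    proof cases
      case zero
      then show ?thesis
        using syllable_word_reduce_zero_exponent[OF less.prems(1) zero less.prems(2) nontrivial] that by blast
    next
      case pivot_zero
      then show ?thesis
        using syllable_word_reduce_P_pow[OF less.prems(1) pivot_zero less.prems(2)] that by blast
    next
      case generic
      then show ?thesis using syllable_word_ne_one[OF less.prems(1) \<open>L \<noteq> []\<close>] less.prems(2) by blast
    qed
    then show False
      using less.hyps less.prems(2) nontrivial unfolding same_triviality_def by blast
  qed
qed

end

lemma (in path_raag_setting) rep_faithful: "faithful_raag_rep path_edge \<rho>"
  unfolding faithful_raag_rep_def
  using invertible_rep rep_commute syllable_word_exists syllable_word_faithful by metis

theorem theorem3p3:
  fixes a b c d al be ga de lm ph :: "'a::field"
  assumes field: "iso_to_complex TYPE('a) \<or>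
                  (alg_closed TYPE('a) \<and> prime CHAR('a) \<and> infinite_trdeg TYPE('a))"
    and det1: "a * d - b * c \<noteq> 0"
    and det2: "al * de - be * ga \<noteq> 0"
    and lam: "lm \<noteq> 0"
    and hyp1: "\<forall>n::nat. n \<ge> 1 \<longrightarrow>
                 (mat_pow (mat2 al be ga de) n) $ 1 $ 2 \<noteq> 0 \<and> (mat_pow (mat2 al be ga de) n) $ 2 $ 1 \<noteq> 0"
    and hyp2_free: "free_on (gens2 a b c d lm)"
    and hyp2_top: "\<forall>w. (word_eval (gens2 a b c d lm) w) $ 1 $ 1 = 1 \<longrightarrow>
                        word_eval (gens2 a b c d lm) w = mat 1"
    and trans: "transcendental_over {a, b, c, d, al, be, ga, de, lm} ph"
  shows "faithful_raag_rep path_edge (rep a b c d al be ga de lm ph)"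
proof -
  \<comment> \<open>The hypothesis on the field only guarantees that a transcendental ph exists.\<close>
  interpret path_raag_setting a b c d al be ga de lm ph
    using det1 det2 lam hyp1 hyp2_free hyp2_top trans by unfold_locales
  show ?thesis by (rule rep_faithful)
qed

end
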